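(* Let $\mathcal G$ be a temporal graph with vertex set $V$, $|V|=n$, and all labels in $\{1,\dots,\tau\}$, considered with non-strict journeys. Then there exists a temporal graph $\mathcal H$ with the same vertex set $V$, all labels in $\{1,\dots,\tau\}$, and at most $n(n+1)\tau/2$ contacts, such that for all $u,v\in V$ there is a non-strict journey from $u$ to $v$ in $\mathcal G$ if and only if there is a strict journey from $u$ to $v$ in $\mathcal H$. In particular, the non-strict reachability graph of $\mathcal G$ equals the strict reachability graph of $\mathcal H$.
   Context: A temporal graph is a triple $\mathcal G=(V,E,\lambda)$ where $V$ is a finite vertex set, $E$ is a set of undirected edges on $V$, and $\lambda:E\to 2^{\mathbb N}\setminus\{\emptyset\}$ assigns to each edge a nonempty set of presence times. The footprint of $\mathcal G$ is the static graph $(V,E)$. A contact is a pair $(e,t)$ with $e\in E$ and $t\in\lambda(e)$. A journey from $u$ to $v$ is a sequence of contacts $(e_1,t_1),\dots,(e_k,t_k)$, $k\ge 1$, such that $e_1,\dots,e_k$ form a path from $u$ to $v$ in the footprint and $t_1\le t_2\le\dots\le t_k$ (a non-strict journey); it is strict if $t_1<t_2<\dots<t_k$. The reachability graph (with respect to a chosen journey notion) is the directed graph on $V$ having an arc $(u,v)$, $u\neq v$, if and only if there is a journey from $u$ to $v$. *)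

theory Defs
  imports Main
begin

record 'a tgraph =
  verts :: "'a set"
  edges :: "'a set set"
  lab   :: "'a set \<Rightarrow> nat set"

definition temporal_graph :: "'a tgraph \<Rightarrow> bool" where
  "temporal_graph G \<longleftrightarrow> finite (verts G)
     \<and> (\<forall>e\<in>edges G. e \<subseteq> verts G \<and> card e = 2)
     \<and> (\<forall>e\<in>edges G. lab G e \<noteq> {})"

definition contacts :: "'a tgraph \<Rightarrow> ('a set \<times> nat) set" where
  "contacts G = {(e, t). e \<in> edges G \<and> t \<in> lab G e}"

definition labels_within :: "'a tgraph \<Rightarrow> nat \<Rightarrow> bool" where
  "labels_within G \<tau> \<longleftrightarrow> (\<forall>e\<in>edges G. lab G e \<subseteq> {1..\<tau>})"

text \<open>A journey from u to v, given by the vertex sequence vs = [x_0,...,x_k] of a path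
  (distinct vertices, k \<ge> 1) in the footprint and the times ts = [t_1,...,t_k] of
  the contacts ({x_(i-1), x_i}, t_i); ord is the order required between consecutive times
  (\<le> for non-strict, < for strict journeys).\<close>
definition is_journey ::
  "(nat \<Rightarrow> nat \<Rightarrow> bool) \<Rightarrow> 'a tgraph \<Rightarrow> 'a \<Rightarrow> 'a \<Rightarrow> 'a list \<Rightarrow> nat list \<Rightarrow> bool" where
  "is_journey ord G u v vs ts \<longleftrightarrow>
     length vs \<ge> 2 \<and> length ts = length vs - 1
     \<and> hd vs = u \<and> last vs = v \<and> distinct vs
     \<and> (\<forall>i < length ts. {vs ! i, vs ! Suc i} \<in> edges G \<and> ts ! i \<in> lab G {vs ! i, vs ! Suc i})
     \<and> sorted_wrt ord ts"

definition nonstrict_journey :: "'a tgraph \<Rightarrow> 'a \<Rightarrow> 'a \<Rightarrow> bool" where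
  "nonstrict_journey G u v \<longleftrightarrow> (\<exists>vs ts. is_journey (\<le>) G u v vs ts)"

definition strict_journey :: "'a tgraph \<Rightarrow> 'a \<Rightarrow> 'a \<Rightarrow> bool" where
  "strict_journey G u v \<longleftrightarrow> (\<exists>vs ts. is_journey (<) G u v vs ts)"

definition reach_graph :: "('a tgraph \<Rightarrow> 'a \<Rightarrow> 'a \<Rightarrow> bool) \<Rightarrow> 'a tgraph \<Rightarrow> ('a \<times> 'a) set" where
  "reach_graph J G = {(u, v). u \<in> verts G \<and> v \<in> verts G \<and> u \<noteq> v \<and> J G u v}"

end

theory Submission
  imports Defs
begin

text \<open>Let \<open>H\<close> have the contact \<open>({u,v}, t)\<close> whenever \<open>u \<noteq> v\<close> lie in the same connected
  component of the snapshot of \<open>G\<close> at time \<open>t\<close>. A non-strict journey of \<open>G\<close> splits into maximal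
  blocks of contacts with equal time; each block runs inside one snapshot component and can be
  replaced by a single contact of \<open>H\<close>, giving a strict journey. Conversely each contact of \<open>H\<close>
  expands into a path of one snapshot, all of whose contacts carry the same time, so a strict
  journey of \<open>H\<close> expands into a non-strict walk of \<open>G\<close>, which can be shortcut to a journey.
  \<open>H\<close> has at most \<open>(n choose 2) \<tau>\<close> contacts.\<close>

lemma edge_ends_distinct:
  assumes "temporal_graph G" "{a, b} \<in> edges G"
  shows "a \<noteq> b"
  using assms unfolding temporal_graph_def by fastforce

text \<open>\<open>temporal_walk G nxt a t c\<close>: \<open>c\<close> is reached from \<open>a\<close> along a walk (vertices may repeat)
  whose first contact has time \<open>\<ge> t\<close> and where a contact at time \<open>s\<close> may be followed only by
  contacts at times \<open>\<ge> nxt s\<close>; \<open>nxt = id\<close> models non-strict, \<open>nxt = Suc\<close> strict journeys.\<close>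
inductive temporal_walk :: "'a tgraph \<Rightarrow> (nat \<Rightarrow> nat) \<Rightarrow> 'a \<Rightarrow> nat \<Rightarrow> 'a \<Rightarrow> bool"
  for G nxt where
  walk_refl: "temporal_walk G nxt a t a"
| walk_step: "{a, b} \<in> edges G \<Longrightarrow> s \<in> lab G {a, b} \<Longrightarrow> t \<le> s \<Longrightarrow>
    temporal_walk G nxt b (nxt s) c \<Longrightarrow> temporal_walk G nxt a t c"

lemma temporal_walk_antimono:
  "temporal_walk G nxt a t c \<Longrightarrow> t' \<le> t \<Longrightarrow> temporal_walk G nxt a t' c"
  by (induction arbitrary: t' rule: temporal_walk.induct)
    (auto intro: temporal_walk.intros order_trans)

lemma is_journey_drop:
  assumes "is_journey ord G u v vs ts" "k < length ts"
  shows "is_journey ord G (vs ! k) v (drop k vs) (drop k ts)"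
  using assms unfolding is_journey_def
  by (auto simp: hd_drop_conv_nth last_drop sorted_wrt_drop add.commute[of k])

lemma is_journey_ends_distinct:
  assumes "is_journey ord G u v vs ts"
  shows "u \<noteq> v"
proof -
  have "distinct vs" "vs \<noteq> []" "2 \<le> length vs" "hd vs = u" "last vs = v"
    using assms unfolding is_journey_def by auto
  moreover from this have "vs ! 0 \<noteq> vs ! (length vs - 1)"
    using nth_eq_iff_index_eq[of vs 0 "length vs - 1"] by simp
  ultimately show ?thesis by (auto simp: hd_conv_nth last_conv_nth)
qed

lemma is_journey_hd_le:
  assumes "is_journey ord G u v vs ts" "\<And>x y. ord x y \<Longrightarrow> x \<le> y" "x \<in> set ts"
  shows "hd ts \<le> x"
proof -
  obtain y ys where "ts = y # ys" "sorted_wrt ord ts"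
    using assms(1) unfolding is_journey_def by (cases ts) auto
  then show ?thesis using assms(2,3) by auto
qed

lemma is_journey_Cons:
  assumes j: "is_journey ord G b c vs ts" and "a \<notin> set vs"
    and "{a, b} \<in> edges G" "s \<in> lab G {a, b}" "\<forall>x\<in>set ts. ord s x"
  shows "is_journey ord G a c (a # vs) (s # ts)"
proof -
  have "vs \<noteq> []" "hd vs = b" using j unfolding is_journey_def by auto
  have contact: "{(a # vs) ! i, (a # vs) ! Suc i} \<in> edges G
      \<and> (s # ts) ! i \<in> lab G {(a # vs) ! i, (a # vs) ! Suc i}"
    if "i < length (s # ts)" for i
    using that j assms(3,4) \<open>vs \<noteq> []\<close> \<open>hd vs = b\<close> unfolding is_journey_def
    by (cases i) (auto simp: hd_conv_nth)
  show ?thesis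
    using j assms(2,5) \<open>vs \<noteq> []\<close> contact unfolding is_journey_def
    by (auto simp: Suc_le_eq)
qed

lemma journey_imp_temporal_walk:
  assumes "is_journey ord G u v vs ts" "\<And>x y. ord x y \<longleftrightarrow> nxt x \<le> y" "t \<le> hd ts"
  shows "temporal_walk G nxt u t v"
  using assms
proof (induction vs arbitrary: u ts t)
  case Nil
  then show ?case by (simp add: is_journey_def)
next
  case (Cons x vs)
  obtain s ts' where ts: "ts = s # ts'"
    using Cons.prems(1) unfolding is_journey_def by (cases ts) auto
  have "vs \<noteq> []" "x = u" using Cons.prems(1) by (auto simp: is_journey_def)
  then have edge: "{u, hd vs} \<in> edges G" "s \<in> lab G {u, hd vs}"
    using Cons.prems(1) ts unfolding is_journey_def by (auto simp: hd_conv_nth dest: spec[of _ 0])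
  have "temporal_walk G nxt (hd vs) (nxt s) v"
  proof (cases "ts' = []")
    case True
    then have "vs = [v]" using Cons.prems(1) ts unfolding is_journey_def by (cases vs) auto
    then show ?thesis by (simp add: walk_refl)
  next
    case False
    have "is_journey ord G (hd vs) v vs ts'"
      using is_journey_drop[OF Cons.prems(1), of 1] ts False \<open>vs \<noteq> []\<close> by (auto simp: hd_conv_nth)
    moreover have "nxt s \<le> hd ts'"
      using Cons.prems(1,2) ts False unfolding is_journey_def by (cases ts') auto
    ultimately show ?thesis using Cons.IH Cons.prems(2) by blast
  qed
  then show ?case using edge Cons.prems(3) ts by (auto intro: walk_step)
qed

text \<open>Shortcutting: if the walk revisits a vertex of the journey built so far, restart the
  journey from that vertex instead of prepending a contact.\<close>
lemma temporal_walk_imp_journey: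
  assumes "temporal_walk G nxt a t c" "temporal_graph G" "a \<noteq> c"
    and ord: "\<And>x y. ord x y \<longleftrightarrow> nxt x \<le> y" and nxt_ge: "\<And>x. x \<le> nxt x"
  shows "\<exists>vs ts. is_journey ord G a c vs ts \<and> t \<le> hd ts"
  using assms(1-3)
proof (induction rule: temporal_walk.induct)
  case (walk_refl a t)
  then show ?case by simp
next
  case (walk_step a b s t c)
  have ord_le: "ord x y \<Longrightarrow> x \<le> y" for x y using ord nxt_ge order_trans by blast
  show ?case
  proof (cases "b = c")
    case True
    have "is_journey ord G a c [a, c] [s]"
      using walk_step.hyps(1,2) walk_step.prems(1) True edge_ends_distinct[of G a b]
      unfolding is_journey_def by auto
    then show ?thesis using walk_step.hyps(3) by force
  next
    case False
    then obtain vs ts where j: "is_journey ord G b c vs ts" and first: "nxt s \<le> hd ts"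
      using walk_step.IH walk_step.prems(1) by blast
    have hd_le: "hd ts \<le> x" if "x \<in> set ts" for x using is_journey_hd_le[OF j ord_le that] .
    show ?thesis
    proof (cases "a \<in> set vs")
      case False
      have "\<forall>x\<in>set ts. ord s x" using first hd_le ord by (auto intro: order_trans)
      then have "is_journey ord G a c (a # vs) (s # ts)"
        using is_journey_Cons[OF j False walk_step.hyps(1,2)] by blast
      then show ?thesis using walk_step.hyps(3) by force
    next
      case True
      then obtain k where k: "k < length vs" "vs ! k = a" by (meson in_set_conv_nth)
      have "vs \<noteq> []" "last vs = c" "length ts = length vs - 1" using j unfolding is_journey_def by auto
      then have "k < length ts"
        using k walk_step.prems(2) last_conv_nth[of vs] by (cases "k = length vs - 1") auto
      then have "is_journey ord G a c (drop k vs) (drop k ts)" "hd (drop k ts) = ts ! k"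
        using is_journey_drop[OF j] k by (auto simp: hd_drop_conv_nth)
      moreover have "t \<le> ts ! k"
        using hd_le[of "ts ! k"] \<open>k < length ts\<close> first nxt_ge[of s] walk_step.hyps(3) by simp
      ultimately show ?thesis by metis
    qed
  qed
qed

lemma journey_iff_temporal_walk:
  assumes "temporal_graph G" "\<And>x y. ord x y \<longleftrightarrow> nxt x \<le> y" "\<And>x. x \<le> nxt x"
  shows "(\<exists>vs ts. is_journey ord G u v vs ts) \<longleftrightarrow> u \<noteq> v \<and> temporal_walk G nxt u 0 v"
proof
  assume "\<exists>vs ts. is_journey ord G u v vs ts"
  then obtain vs ts where j: "is_journey ord G u v vs ts" by blast
  have "temporal_walk G nxt u 0 v" by (rule journey_imp_temporal_walk[OF j]) (use assms(2) in auto)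
  then show "u \<noteq> v \<and> temporal_walk G nxt u 0 v" using is_journey_ends_distinct[OF j] by blast
next
  assume "u \<noteq> v \<and> temporal_walk G nxt u 0 v"
  then have "\<exists>vs ts. is_journey ord G u v vs ts \<and> 0 \<le> hd ts"
    by (intro temporal_walk_imp_journey[where nxt = nxt]) (use assms in auto)
  then show "\<exists>vs ts. is_journey ord G u v vs ts" by blast
qed

lemma nonstrict_journey_iff_walk:
  "temporal_graph G \<Longrightarrow> nonstrict_journey G u v \<longleftrightarrow> u \<noteq> v \<and> temporal_walk G id u 0 v"
  unfolding nonstrict_journey_def by (rule journey_iff_temporal_walk) auto

lemma strict_journey_iff_walk:
  "temporal_graph G \<Longrightarrow> strict_journey G u v \<longleftrightarrow> u \<noteq> v \<and> temporal_walk G Suc u 0 v"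
  unfolding strict_journey_def by (rule journey_iff_temporal_walk) auto

inductive snapshot_connected :: "'a tgraph \<Rightarrow> nat \<Rightarrow> 'a \<Rightarrow> 'a \<Rightarrow> bool" for G t where
  snapshot_refl: "snapshot_connected G t a a"
| snapshot_step: "{a, b} \<in> edges G \<Longrightarrow> t \<in> lab G {a, b} \<Longrightarrow> snapshot_connected G t b c \<Longrightarrow>
    snapshot_connected G t a c"

lemma snapshot_connected_trans:
  "snapshot_connected G t a b \<Longrightarrow> snapshot_connected G t b c \<Longrightarrow> snapshot_connected G t a c"
  by (induction rule: snapshot_connected.induct) (auto intro: snapshot_connected.intros)

lemma snapshot_connected_edge:
  "{a, b} \<in> edges G \<Longrightarrow> t \<in> lab G {a, b} \<Longrightarrow> snapshot_connected G t a b"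
  by (auto intro: snapshot_connected.intros)

lemma snapshot_connected_sym:
  "snapshot_connected G t a b \<Longrightarrow> snapshot_connected G t b a"
proof (induction rule: snapshot_connected.induct)
  case (snapshot_refl a)
  show ?case by (rule snapshot_connected.snapshot_refl)
next
  case (snapshot_step a b c)
  then have "snapshot_connected G t b a"
    using snapshot_connected_edge[of b a] by (simp add: insert_commute)
  then show ?case using snapshot_step.IH snapshot_connected_trans by metis
qed

lemma snapshot_connected_distinct:
  assumes "snapshot_connected G t a b" "temporal_graph G" "a \<noteq> b"
  shows "a \<in> verts G \<and> b \<in> verts G \<and> (\<exists>e\<in>edges G. t \<in> lab G e)"
  using assms
proof (induction rule: snapshot_connected.induct)
  case (snapshot_refl a)
  then show ?case by simp
next
  case (snapshot_step a b c)
  then have "{a, b} \<subseteq> verts G" unfolding temporal_graph_def by blast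
  then show ?case using snapshot_step by (cases "b = c") auto
qed

lemma snapshot_connected_temporal_walk:
  "snapshot_connected G t a b \<Longrightarrow> temporal_walk G id b t c \<Longrightarrow> s \<le> t \<Longrightarrow>
    temporal_walk G id a s c"
proof (induction arbitrary: s rule: snapshot_connected.induct)
  case (snapshot_refl a)
  then show ?case by (rule temporal_walk_antimono)
next
  case (snapshot_step a b c')
  have "temporal_walk G id b t c" by (rule snapshot_step.IH[OF snapshot_step.prems(1) order.refl])
  then have "temporal_walk G id b (id t) c" by (simp only: id_apply)
  then show ?case using snapshot_step.hyps(1,2) snapshot_step.prems(2) by (rule walk_step[rotated 3])
qed

definition snapshot_closure :: "'a tgraph \<Rightarrow> 'a tgraph" where
  "snapshot_closure G = \<lparr>verts = verts G,
     edges = {{a, b} | a b. a \<noteq> b \<and> (\<exists>t. snapshot_connected G t a b)},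
     lab = (\<lambda>e. {t. \<exists>a b. e = {a, b} \<and> a \<noteq> b \<and> snapshot_connected G t a b})\<rparr>"

lemma snapshot_closure_simps:
  "verts (snapshot_closure G) = verts G"
  "edges (snapshot_closure G) = {{a, b} | a b. a \<noteq> b \<and> (\<exists>t. snapshot_connected G t a b)}"
  "lab (snapshot_closure G) e = {t. \<exists>a b. e = {a, b} \<and> a \<noteq> b \<and> snapshot_connected G t a b}"
  by (simp_all add: snapshot_closure_def)

lemma snapshot_closure_contact:
  "snapshot_connected G t a b \<Longrightarrow> a \<noteq> b \<Longrightarrow>
    {a, b} \<in> edges (snapshot_closure G) \<and> t \<in> lab (snapshot_closure G) {a, b}"
  unfolding snapshot_closure_simps by blast

text \<open>The extra vertex \<open>b\<close> records the snapshot component at time \<open>t\<close> already traversed: the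
  closure jumps from \<open>b\<close> directly to wherever that component is left.\<close>
lemma nonstrict_walk_imp_closure_strict_walk:
  "temporal_walk G id a t c \<Longrightarrow> snapshot_connected G t b a \<Longrightarrow>
    temporal_walk (snapshot_closure G) Suc b t c"
proof (induction arbitrary: b rule: temporal_walk.induct)
  case (walk_refl a t)
  then show ?case
    using snapshot_closure_contact[of G t b a]
    by (cases "b = a") (auto intro: temporal_walk.intros)
next
  case (walk_step a a' s t c)
  show ?case
  proof (cases "s = t")
    case True
    then have "snapshot_connected G s b a'"
      using walk_step snapshot_connected_trans snapshot_connected_edge by metis
    then show ?thesis using walk_step.IH True by simp
  next
    case False
    have walk: "temporal_walk (snapshot_closure G) Suc a s c"
      using walk_step.IH[of a] snapshot_connected_edge[OF walk_step.hyps(1,2)] by simp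
    show ?thesis
    proof (cases "b = a")
      case True
      then show ?thesis using temporal_walk_antimono[OF walk walk_step.hyps(3)] by simp
    next
      case False
      have "Suc t \<le> s" using walk_step.hyps(3) \<open>s \<noteq> t\<close> by simp
      then have "temporal_walk (snapshot_closure G) Suc a (Suc t) c"
        by (rule temporal_walk_antimono[OF walk])
      with snapshot_closure_contact[OF walk_step.prems False] show ?thesis
        by (blast intro: temporal_walk.walk_step)
    qed
  qed
qed

lemma closure_strict_walk_imp_nonstrict_walk:
  "temporal_walk (snapshot_closure G) Suc a t c \<Longrightarrow> temporal_walk G id a t c"
proof (induction rule: temporal_walk.induct)
  case (walk_refl a t)
  show ?case by (rule temporal_walk.walk_refl)
next
  case (walk_step a b s t c)
  obtain a' b' where "{a, b} = {a', b'}" "snapshot_connected G s a' b'"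
    using walk_step.hyps(2) unfolding snapshot_closure_simps by blast
  then have "snapshot_connected G s a b"
    using snapshot_connected_sym by (auto simp: doubleton_eq_iff)
  moreover have "temporal_walk G id b s c"
    by (rule temporal_walk_antimono[OF walk_step.IH]) simp
  ultimately show ?case by (rule snapshot_connected_temporal_walk[OF _ _ walk_step.hyps(3)])
qed

lemma temporal_graph_snapshot_closure:
  assumes "temporal_graph G" "labels_within G \<tau>"
  shows "temporal_graph (snapshot_closure G) \<and> labels_within (snapshot_closure G) \<tau>"
proof -
  have edge: "e \<subseteq> verts G \<and> card e = 2 \<and> lab (snapshot_closure G) e \<noteq> {}
      \<and> lab (snapshot_closure G) e \<subseteq> {1..\<tau>}"
    if e: "e \<in> edges (snapshot_closure G)" for e
  proof -
    obtain a b t where ab: "e = {a, b}" "a \<noteq> b" "snapshot_connected G t a b"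
      using e unfolding snapshot_closure_simps by blast
    have "lab (snapshot_closure G) e \<subseteq> {1..\<tau>}"
      using snapshot_connected_distinct[OF _ assms(1)] assms(2)
      unfolding snapshot_closure_simps labels_within_def by blast
    then show ?thesis
      using ab snapshot_connected_distinct[OF ab(3) assms(1) ab(2)]
        snapshot_closure_contact[OF ab(3,2)] by auto
  qed
  then show ?thesis
    using assms(1) unfolding temporal_graph_def labels_within_def snapshot_closure_simps(1)
    by blast
qed

lemma card_contacts_le:
  assumes "temporal_graph G" "labels_within G \<tau>" "card (verts G) = n"
  shows "card (contacts G) \<le> (n choose 2) * \<tau>"
proof -
  have fin: "finite (verts G)" using assms(1) unfolding temporal_graph_def by blast
  have "contacts G \<subseteq> {e. e \<subseteq> verts G \<and> card e = 2} \<times> {1..\<tau>}"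
    using assms(1,2) unfolding contacts_def temporal_graph_def labels_within_def by blast
  then have "card (contacts G) \<le> card ({e. e \<subseteq> verts G \<and> card e = 2} \<times> {1..\<tau>})"
    by (rule card_mono[rotated]) (simp add: fin)
  also have "\<dots> = (n choose 2) * \<tau>"
    using n_subsets[OF fin, of 2] assms(3) by (simp add: card_cartesian_product)
  finally show ?thesis .
qed

lemma choose_two_mult_le: "(n choose 2) * \<tau> \<le> n * (n + 1) * \<tau> div 2"
proof -
  have "even (n * (n - 1))" by auto
  then have "(n choose 2) * \<tau> = n * (n - 1) * \<tau> div 2"
    by (simp add: choose_two div_mult_swap mult.commute)
  also have "\<dots> \<le> n * (n + 1) * \<tau> div 2"
    by (intro div_le_mono mult_le_mono) auto
  finally show ?thesis .
qed

theorem mainTheorem10: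
  fixes G :: "'a tgraph" and n \<tau> :: nat
  assumes "temporal_graph G"
    and "card (verts G) = n"
    and "labels_within G \<tau>"
  shows "\<exists>H :: 'a tgraph. temporal_graph H \<and> verts H = verts G \<and> labels_within H \<tau>
           \<and> card (contacts H) \<le> n * (n + 1) * \<tau> div 2
           \<and> (\<forall>u\<in>verts G. \<forall>v\<in>verts G. nonstrict_journey G u v \<longleftrightarrow> strict_journey H u v)
           \<and> reach_graph nonstrict_journey G = reach_graph strict_journey H"
proof -
  let ?H = "snapshot_closure G"
  have H: "temporal_graph ?H" "labels_within ?H \<tau>" "verts ?H = verts G"
    using temporal_graph_snapshot_closure[OF assms(1,3)] by (auto simp only: snapshot_closure_simps)
  have journeys: "nonstrict_journey G u v \<longleftrightarrow> strict_journey ?H u v" for u v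
  proof -
    have "temporal_walk G id u 0 v \<longleftrightarrow> temporal_walk ?H Suc u 0 v"
      using nonstrict_walk_imp_closure_strict_walk[OF _ snapshot_refl]
        closure_strict_walk_imp_nonstrict_walk by (intro iffI)
    then show ?thesis
      using nonstrict_journey_iff_walk[OF assms(1)] strict_journey_iff_walk[OF H(1)] by simp
  qed
  have "card (contacts ?H) \<le> (n choose 2) * \<tau>"
    using card_contacts_le[OF H(1,2)] H(3) assms(2) by simp
  also have "\<dots> \<le> n * (n + 1) * \<tau> div 2" by (rule choose_two_mult_le)
  finally have "card (contacts ?H) \<le> n * (n + 1) * \<tau> div 2" .
  moreover have "reach_graph nonstrict_journey G = reach_graph strict_journey ?H"
    unfolding reach_graph_def H(3) journeys ..
  ultimately show ?thesis
    using H journeys by blast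
qed

end
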